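(* Let $L,K\ge1$, let $\mathbf{M}=(m_{l,k})\in\mathbb{R}^{L\times K}$ have all entries strictly positive, and equip $\mathbb{R}^{L\times K}$ with the inner product $\langle\mathbf{Y},\mathbf{Z}\rangle_{\mathbf{M}}=\sum_{l=1}^L\sum_{k=1}^K m_{l,k}y_{l,k}z_{l,k}$ and its norm $\|\cdot\|_{\mathbf{M}}$. Let $\mathcal{H}$ be the subspace of $L\times K$ Hankel matrices and, for an integer $r\ge0$, let $\mathcal{M}_r$ be the set of $L\times K$ matrices of rank at most $r$. Let $\Pi_{\mathcal{H}}$ be the $\|\cdot\|_{\mathbf{M}}$-orthogonal projection onto $\mathcal{H}$ and $\Pi_{\mathcal{M}_r}$ a map assigning to each matrix a $\|\cdot\|_{\mathbf{M}}$-closest point of $\mathcal{M}_r$. For $\mathbf{X}\in\mathbb{R}^{L\times K}$ put $\mathbf{Y}_0=\mathbf{X}$, $\mathbf{Y}_{k+1}=\Pi_{\mathcal{H}}\Pi_{\mathcal{M}_r}\mathbf{Y}_k$. Then $\|\mathbf{Y}_k-\Pi_{\mathcal{M}_r}\mathbf{Y}_k\|_{\mathbf{M}}\to0$, $\|\Pi_{\mathcal{M}_r}\mathbf{Y}_k-\mathbf{Y}_{k+1}\|_{\mathbf{M}}\to0$, and some subsequence of $(\mathbf{Y}_k)$ converges to a Hankel matrix of rank at most $r$.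
   Context: A matrix $(y_{i,j})\in\mathbb{R}^{L\times K}$ is Hankel if $y_{i,j}$ depends only on $i+j$. *)

theory Defs
  imports "HOL-Analysis.Analysis"
begin

text \<open>Matrices in R^(L x K) are rendered as real^'k^'l, with row index type 'l and
 column index type 'k (finite, linearly ordered). Row/column positions are counted from 0.\<close>

definition idx :: "'a::{finite,linorder} \<Rightarrow> nat" where
  "idx i = card {j. j < i}"

definition hankel :: "(real^'k::{finite,linorder}^'l::{finite,linorder}) set" where
  "hankel = {Y. \<forall>i j i' j'. idx i + idx j = idx i' + idx j' \<longrightarrow> Y$i$j = Y$i'$j'}"

definition low_rank :: "nat \<Rightarrow> (real^'k^'l) set" where
  "low_rank r = {Y. rank Y \<le> r}"

definition Minner :: "real^'k^'l \<Rightarrow> real^'k^'l \<Rightarrow> real^'k^'l \<Rightarrow> real" where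
  "Minner M Y Z = (\<Sum>i\<in>UNIV. \<Sum>j\<in>UNIV. M$i$j * Y$i$j * Z$i$j)"

definition Mnorm :: "real^'k^'l \<Rightarrow> real^'k^'l \<Rightarrow> real" where
  "Mnorm M Y = sqrt (Minner M Y Y)"

definition is_orth_proj :: "real^'k^'l \<Rightarrow> (real^'k^'l) set \<Rightarrow> (real^'k^'l \<Rightarrow> real^'k^'l) \<Rightarrow> bool" where
  "is_orth_proj M S P \<longleftrightarrow> (\<forall>Y. P Y \<in> S \<and> (\<forall>Z\<in>S. Minner M (Y - P Y) Z = 0))"

definition is_nearest_map :: "real^'k^'l \<Rightarrow> (real^'k^'l) set \<Rightarrow> (real^'k^'l \<Rightarrow> real^'k^'l) \<Rightarrow> bool" where
  "is_nearest_map M S P \<longleftrightarrow> (\<forall>Y. P Y \<in> S \<and> (\<forall>Z\<in>S. Mnorm M (Y - P Y) \<le> Mnorm M (Y - Z)))"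

end

theory Submission
  imports Defs
begin

text \<open>Weighting entry (i, j) by sqrt m_ij turns the M-inner product into the Euclidean one, so it
  suffices to study alternating projections between a set H carrying an orthogonal projection and
  a cone C (matrices of rank at most r are closed under scaling) carrying a nearest-point map.
  Because C is a cone, x - P_C x is orthogonal to P_C x; together with Pythagoras for P_H this
  shows that the iterates y_k shrink in norm, that d_k = dist(y_k, C) decreases, and that
  |y_{k+1} - y_k|^2 <= d_k^2 - d_{k+1}^2, so the steps tend to 0. The estimate
  d_k^2 <= |y_0| |y_k - y_{k+1}| then forces d_k -> 0. The bounded iterates have a convergent
  subsequence, whose limit lies in H and in C since the projection maps make both sets closed.\<close>

lemma nearest_on_line_orthogonal:
  fixes x z :: "'a::real_inner"
  assumes nearest: "\<And>c. norm (x - z) \<le> norm (x - c *\<^sub>R z)"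
  shows "inner (x - z) z = 0"
proof (cases "z = 0")
  case False
  define a where "a = inner z z"
  define b where "b = inner x z"
  have "a > 0" using False by (simp add: a_def)
  have sq: "norm (x - c *\<^sub>R z) ^ 2 = inner x x - 2 * c * b + c ^ 2 * a" for c
    unfolding power2_norm_eq_inner
    by (simp add: inner_diff_left inner_diff_right a_def b_def inner_commute
        power2_eq_square algebra_simps)
  \<comment> \<open>compare with the foot of the perpendicular from x to the line through z\<close>
  have "norm (x - z) ^ 2 \<le> norm (x - (b / a) *\<^sub>R z) ^ 2"
    using nearest by (simp add: power_mono)
  then have "inner x x - 2 * b + a \<le> inner x x - 2 * (b / a) * b + (b / a) ^ 2 * a"
    using sq[of 1] sq[of "b / a"] by simp
  then have "(a - b) ^ 2 \<le> 0"
    using \<open>a > 0\<close> by (simp add: field_simps power2_eq_square)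
  then have "a = b" by simp
  then show ?thesis by (simp add: a_def b_def inner_diff_left)
qed simp

lemma decseq_diff_tendsto_zero:
  fixes f :: "nat \<Rightarrow> real"
  assumes "decseq f" and "\<And>n. 0 \<le> f n"
  shows "(\<lambda>n. f n - f (Suc n)) \<longlonglongrightarrow> 0"
proof -
  obtain L where "f \<longlonglongrightarrow> L"
    using decseq_convergent[OF assms(1)] assms(2) by blast
  then have "(\<lambda>n. f n - f (Suc n)) \<longlonglongrightarrow> L - L"
    by (intro tendsto_diff LIMSEQ_Suc)
  then show ?thesis by simp
qed

locale alternating_projections =
  fixes H C :: "'a::real_inner set" and PH PC :: "'a \<Rightarrow> 'a"
  assumes PH_in: "PH x \<in> H"
    and PH_orthogonal: "z \<in> H \<Longrightarrow> inner (x - PH x) z = 0"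
    and PC_in: "PC x \<in> C"
    and PC_nearest: "z \<in> C \<Longrightarrow> norm (x - PC x) \<le> norm (x - z)"
    and C_cone: "z \<in> C \<Longrightarrow> c *\<^sub>R z \<in> C"
begin

lemma PC_orthogonal: "inner (x - PC x) (PC x) = 0"
  by (rule nearest_on_line_orthogonal) (simp add: PC_nearest C_cone PC_in)

lemma norm_PC_Pythagorean: "norm x ^ 2 = norm (x - PC x) ^ 2 + norm (PC x) ^ 2"
  using norm_add_Pythagorean[of "x - PC x" "PC x"] PC_orthogonal[of x]
  by (simp add: orthogonal_def)

lemma norm_PH_Pythagorean: "norm x ^ 2 = norm (x - PH x) ^ 2 + norm (PH x) ^ 2"
  using norm_add_Pythagorean[of "x - PH x" "PH x"] PH_orthogonal[OF PH_in, of x]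
  by (simp add: orthogonal_def)

lemma dist_PH_Pythagorean:
  assumes "z \<in> H"
  shows "norm (x - z) ^ 2 = norm (x - PH x) ^ 2 + norm (PH x - z) ^ 2"
  using norm_add_Pythagorean[of "x - PH x" "PH x - z"]
    PH_orthogonal[OF PH_in, of x] PH_orthogonal[OF assms, of x]
  by (simp add: orthogonal_def inner_diff_right)

lemma closed_H: "closed H"
proof (unfold closed_sequential_limits, intro allI impI, elim conjE)
  fix x l assume x_in: "\<forall>n. x n \<in> H" and x_lim: "x \<longlonglongrightarrow> l"
  have "(\<lambda>n. inner (l - PH l) (x n)) \<longlonglongrightarrow> inner (l - PH l) l"
    using x_lim by (intro tendsto_inner tendsto_const)
  moreover have "(\<lambda>n. inner (l - PH l) (x n)) = (\<lambda>n. 0)"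
    using x_in PH_orthogonal by blast
  ultimately have "inner (l - PH l) l = 0"
    by (simp add: LIMSEQ_const_iff)
  then have "inner (l - PH l) (l - PH l) = 0"
    using PH_orthogonal[OF PH_in, of l] by (simp add: inner_diff_right)
  then show "l \<in> H" using PH_in[of l] by simp
qed

lemma closed_C: "closed C"
proof (unfold closed_sequential_limits, intro allI impI, elim conjE)
  fix x l assume x_in: "\<forall>n. x n \<in> C" and x_lim: "x \<longlonglongrightarrow> l"
  have "(\<lambda>n. norm (l - x n)) \<longlonglongrightarrow> 0"
    using tendsto_dist[OF tendsto_const x_lim, of l] by (simp add: dist_norm)
  then have "norm (l - PC l) \<le> 0"
    using x_in PC_nearest by (intro tendsto_lowerbound[where F=sequentially]) auto
  then show "l \<in> C" using PC_in[of l] by simp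
qed

context
  fixes y :: "nat \<Rightarrow> 'a"
  assumes y_Suc: "y (Suc n) = PH (PC (y n))"
begin

lemma y_Suc_in_H: "y (Suc n) \<in> H"
  by (simp add: y_Suc PH_in)

lemma norm_y_Suc_le: "norm (y (Suc n)) \<le> norm (y n)"
proof -
  have "norm (y (Suc n)) ^ 2 \<le> norm (PC (y n)) ^ 2"
    unfolding y_Suc using norm_PH_Pythagorean[of "PC (y n)"] by simp
  also have "\<dots> \<le> norm (y n) ^ 2"
    using norm_PC_Pythagorean[of "y n"] by simp
  finally show ?thesis by (rule power2_le_imp_le) simp
qed

lemma norm_y_le: "norm (y n) \<le> norm (y 0)"
  by (induction n) (use norm_y_Suc_le order_trans in blast)+

lemma dist_PC_Suc_le: "norm (y (Suc n) - PC (y (Suc n))) \<le> norm (PC (y n) - y (Suc n))"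
  using PC_nearest[OF PC_in, of "y (Suc n)" "y n"] by (simp add: norm_minus_commute)

lemma norm_step_sq_le:
  "norm (y (Suc (Suc n)) - y (Suc n)) ^ 2
     \<le> norm (y (Suc n) - PC (y (Suc n))) ^ 2 - norm (y (Suc (Suc n)) - PC (y (Suc (Suc n)))) ^ 2"
proof -
  have "norm (y (Suc n) - PC (y (Suc n))) ^ 2
      = norm (PC (y (Suc n)) - y (Suc (Suc n))) ^ 2 + norm (y (Suc (Suc n)) - y (Suc n)) ^ 2"
    using dist_PH_Pythagorean[OF y_Suc_in_H, of "PC (y (Suc n))" n]
    by (simp add: y_Suc norm_minus_commute)
  moreover have "norm (y (Suc (Suc n)) - PC (y (Suc (Suc n)))) ^ 2
      \<le> norm (PC (y (Suc n)) - y (Suc (Suc n))) ^ 2"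
    by (simp add: dist_PC_Suc_le power_mono)
  ultimately show ?thesis by simp
qed

lemma dist_PC_sq_le:
  "norm (y (Suc n) - PC (y (Suc n))) ^ 2 \<le> norm (y 0) * norm (y (Suc n) - y (Suc (Suc n)))"
proof -
  let ?x = "y (Suc n)"
  have "norm (?x - PC ?x) ^ 2 = inner (?x - PC ?x) ?x"
    using PC_orthogonal[of ?x] by (simp add: power2_norm_eq_inner inner_diff_right)
  also have "\<dots> = inner (?x - y (Suc (Suc n))) ?x"
    using PH_orthogonal[OF y_Suc_in_H, of "PC ?x" n] by (simp add: y_Suc inner_diff_left)
  also have "\<dots> \<le> norm (?x - y (Suc (Suc n))) * norm ?x"
    by (rule norm_cauchy_schwarz)
  also have "\<dots> \<le> norm (?x - y (Suc (Suc n))) * norm (y 0)"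
    by (simp add: norm_y_le mult_left_mono)
  finally show ?thesis by (simp add: mult.commute)
qed

lemma norm_step_tendsto_zero: "(\<lambda>n. norm (y (Suc n) - y n)) \<longlonglongrightarrow> 0"
proof -
  define D where "D n = norm (y (Suc n) - PC (y (Suc n))) ^ 2" for n
  have "decseq D"
    unfolding decseq_Suc_iff D_def
    using norm_step_sq_le zero_le_power2 by (meson diff_ge_0_iff_ge order_trans)
  then have "(\<lambda>n. D n - D (Suc n)) \<longlonglongrightarrow> 0"
    by (rule decseq_diff_tendsto_zero) (simp add: D_def)
  then have "(\<lambda>n. norm (y (Suc (Suc n)) - y (Suc n)) ^ 2) \<longlonglongrightarrow> 0"
    by (rule Lim_null_comparison[OF always_eventually, rotated]) (simp add: D_def norm_step_sq_le)
  then have "(\<lambda>n. sqrt (norm (y (Suc (Suc n)) - y (Suc n)) ^ 2)) \<longlonglongrightarrow> sqrt 0"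
    by (rule tendsto_real_sqrt)
  then have "(\<lambda>n. norm (y (Suc (Suc n)) - y (Suc n))) \<longlonglongrightarrow> 0"
    by simp
  then show ?thesis by (rule LIMSEQ_imp_Suc)
qed

lemma dist_PC_tendsto_zero: "(\<lambda>n. norm (y n - PC (y n))) \<longlonglongrightarrow> 0"
proof -
  have "(\<lambda>n. norm (y 0) * norm (y (Suc n) - y (Suc (Suc n)))) \<longlonglongrightarrow> 0"
    using tendsto_mult_right_zero[OF LIMSEQ_Suc[OF norm_step_tendsto_zero]]
    by (simp add: norm_minus_commute)
  then have "(\<lambda>n. norm (y (Suc n) - PC (y (Suc n))) ^ 2) \<longlonglongrightarrow> 0"
    by (rule Lim_null_comparison[OF always_eventually, rotated]) (simp add: dist_PC_sq_le)
  then have "(\<lambda>n. sqrt (norm (y (Suc n) - PC (y (Suc n))) ^ 2)) \<longlonglongrightarrow> sqrt 0"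
    by (rule tendsto_real_sqrt)
  then have "(\<lambda>n. norm (y (Suc n) - PC (y (Suc n)))) \<longlonglongrightarrow> 0"
    by simp
  then show ?thesis by (rule LIMSEQ_imp_Suc)
qed

lemma dist_PH_tendsto_zero: "(\<lambda>n. norm (PC (y n) - y (Suc n))) \<longlonglongrightarrow> 0"
proof (rule Lim_null_comparison[OF always_eventually])
  show "(\<lambda>n. norm (PC (y n) - y n) + norm (y n - y (Suc n))) \<longlonglongrightarrow> 0"
    using tendsto_add[OF dist_PC_tendsto_zero norm_step_tendsto_zero]
    by (simp only: norm_minus_commute add_0)
  show "\<forall>n. norm (norm (PC (y n) - y (Suc n))) \<le> norm (PC (y n) - y n) + norm (y n - y (Suc n))"
    by (metis norm_diff_triangle_le real_norm_def abs_norm_cancel order_refl)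
qed

lemma limit_point_in_H_C:
  assumes "strict_mono s" and "(y \<circ> s) \<longlonglongrightarrow> l"
  shows "l \<in> H \<inter> C"
proof
  have "eventually (\<lambda>n. y (s n) \<in> H) sequentially"
  proof (rule eventually_sequentiallyI)
    fix n :: nat assume "1 \<le> n"
    then have "s n = Suc (s n - 1)" using seq_suble[OF assms(1), of n] by simp
    then show "y (s n) \<in> H" by (metis y_Suc_in_H)
  qed
  then show "l \<in> H"
    using Lim_in_closed_set[OF closed_H _ trivial_limit_sequentially] assms(2)
    by (simp add: o_def)
  have "(\<lambda>n. y (s n) - PC (y (s n))) \<longlonglongrightarrow> 0"
    using LIMSEQ_subseq_LIMSEQ[OF dist_PC_tendsto_zero assms(1)]
    by (simp add: o_def tendsto_norm_zero_iff)
  then have "(\<lambda>n. y (s n) - (y (s n) - PC (y (s n)))) \<longlonglongrightarrow> l - 0"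
    using assms(2) by (intro tendsto_diff) (simp_all add: o_def)
  then have "(\<lambda>n. PC (y (s n))) \<longlonglongrightarrow> l"
    by simp
  then show "l \<in> C"
    using closed_sequentially[OF closed_C, of "\<lambda>n. PC (y (s n))"] PC_in by blast
qed

end

end

lemma alternating_projections_convergent_subsequence:
  fixes y :: "nat \<Rightarrow> 'a::{real_inner,heine_borel}"
  assumes "alternating_projections H C PH PC"
    and y_Suc: "\<And>n. y (Suc n) = PH (PC (y n))"
  shows "\<exists>s l. strict_mono s \<and> l \<in> H \<inter> C \<and> (y \<circ> s) \<longlonglongrightarrow> l"
proof -
  interpret alternating_projections H C PH PC by fact
  have "bounded (range y)"
    using norm_y_le[of y, OF y_Suc] by (auto simp: bounded_iff)
  then obtain s l where "strict_mono s" "(y \<circ> s) \<longlonglongrightarrow> l"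
    using bounded_imp_convergent_subsequence by blast
  then show ?thesis
    using limit_point_in_H_C[of y, OF y_Suc] by blast
qed

definition Mweight :: "real^'k^'l \<Rightarrow> real^'k^'l \<Rightarrow> real^'k^'l" where
  "Mweight M A = (\<chi> i j. sqrt (M$i$j) * A$i$j)"

definition Munweight :: "real^'k^'l \<Rightarrow> real^'k^'l \<Rightarrow> real^'k^'l" where
  "Munweight M A = (\<chi> i j. A$i$j / sqrt (M$i$j))"

lemma Mweight_diff: "Mweight M (A - B) = Mweight M A - Mweight M B"
  by (simp add: Mweight_def vec_eq_iff algebra_simps)

lemma Mweight_scaleR: "Mweight M (c *\<^sub>R A) = c *\<^sub>R Mweight M A"
  by (simp add: Mweight_def vec_eq_iff algebra_simps)

lemma Munweight_Mweight:
  assumes "\<forall>i j. M$i$j > 0"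
  shows "Munweight M (Mweight M A) = A"
  using assms by (simp add: Mweight_def Munweight_def vec_eq_iff) (metis less_irrefl)

lemma Mweight_Munweight:
  assumes "\<forall>i j. M$i$j > 0"
  shows "Mweight M (Munweight M A) = A"
  using assms by (simp add: Mweight_def Munweight_def vec_eq_iff) (metis less_irrefl)

lemma inner_Mweight:
  assumes "\<forall>i j. M$i$j \<ge> 0"
  shows "inner (Mweight M A) (Mweight M B) = Minner M A B"
  using assms unfolding Minner_def Mweight_def inner_vec_def
  by (auto intro!: sum.cong simp: inner_real_def algebra_simps)

lemma norm_Mweight:
  assumes "\<forall>i j. M$i$j \<ge> 0"
  shows "norm (Mweight M A) = Mnorm M A"
  by (simp add: Mnorm_def norm_eq_sqrt_inner inner_Mweight[OF assms])

lemma alternating_projections_Mweight: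
  assumes M_pos: "\<forall>i j. M$i$j > 0"
    and PH: "is_orth_proj M H PH"
    and PC: "is_nearest_map M C PC"
    and C_cone: "\<And>c Z. Z \<in> C \<Longrightarrow> c *\<^sub>R Z \<in> C"
  shows "alternating_projections (Mweight M ` H) (Mweight M ` C)
           (Mweight M \<circ> PH \<circ> Munweight M) (Mweight M \<circ> PC \<circ> Munweight M)"
proof
  have M_nonneg: "\<forall>i j. M$i$j \<ge> 0"
    using M_pos by (simp add: less_imp_le)
  note cancel = Mweight_Munweight[OF M_pos] Munweight_Mweight[OF M_pos]
  fix x z c
  show "(Mweight M \<circ> PH \<circ> Munweight M) x \<in> Mweight M ` H"
    using PH by (simp add: is_orth_proj_def)
  show "(Mweight M \<circ> PC \<circ> Munweight M) x \<in> Mweight M ` C"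
    using PC by (simp add: is_nearest_map_def)
  have weighted_diff: "x - Mweight M Z = Mweight M (Munweight M x - Z)" for Z
    by (simp add: Mweight_diff cancel)
  show "inner (x - (Mweight M \<circ> PH \<circ> Munweight M) x) z = 0" if "z \<in> Mweight M ` H"
    using that PH by (auto simp: weighted_diff is_orth_proj_def inner_Mweight[OF M_nonneg])
  show "norm (x - (Mweight M \<circ> PC \<circ> Munweight M) x) \<le> norm (x - z)" if "z \<in> Mweight M ` C"
    using that PC
    by (auto simp: weighted_diff is_nearest_map_def norm_Mweight[OF M_nonneg])
  show "c *\<^sub>R z \<in> Mweight M ` C" if "z \<in> Mweight M ` C"
    using that C_cone by (auto simp flip: Mweight_scaleR)
qed

lemma rank_scaleR_le: "rank (c *\<^sub>R A) \<le> rank (A :: real^'n^'m)"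
proof -
  have "c *\<^sub>R A = (c *\<^sub>R mat 1) ** A"
    by (metis matrix_mul_lid scalar_matrix_assoc)
  then show ?thesis
    by (metis rank_mul_le_right)
qed

lemma low_rank_scaleR: "Z \<in> low_rank r \<Longrightarrow> c *\<^sub>R Z \<in> low_rank r"
  using rank_scaleR_le[of c Z] by (simp add: low_rank_def)

theorem mainTheorem3:
  fixes M X :: "((real, 'k::{finite,linorder}) vec, 'l::{finite,linorder}) vec"
    and r :: nat
    and PH PM :: "((real, 'k) vec, 'l) vec \<Rightarrow> ((real, 'k) vec, 'l) vec"
    and Y :: "nat \<Rightarrow> ((real, 'k) vec, 'l) vec"
  assumes Mpos: "\<forall>i j. M$i$j > 0"
    and PH: "is_orth_proj M hankel PH"
    and PM: "is_nearest_map M (low_rank r) PM"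
    and Y0: "Y 0 = X"
    and YS: "\<forall>n. Y (Suc n) = PH (PM (Y n))"
  shows "((\<lambda>n. Mnorm M (Y n - PM (Y n))) \<longlonglongrightarrow> 0) \<and>
         ((\<lambda>n. Mnorm M (PM (Y n) - Y (Suc n))) \<longlonglongrightarrow> 0) \<and>
         (\<exists>s Z. strict_mono s \<and> Z \<in> hankel \<and> Z \<in> low_rank r \<and>
               (\<lambda>n. Mnorm M (Y (s n) - Z)) \<longlonglongrightarrow> 0)"
proof -
  let ?W = "Mweight M" and ?U = "Munweight M"
  interpret alternating_projections "?W ` hankel" "?W ` low_rank r"
      "?W \<circ> PH \<circ> ?U" "?W \<circ> PM \<circ> ?U"
    using Mpos PH PM low_rank_scaleR by (rule alternating_projections_Mweight)
  define y where "y n = ?W (Y n)" for n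
  have y_Suc: "y (Suc n) = (?W \<circ> PH \<circ> ?U) ((?W \<circ> PM \<circ> ?U) (y n))" for n
    by (simp add: y_def YS Munweight_Mweight[OF Mpos])
  have Mnorm_diff: "Mnorm M (A - B) = norm (?W A - ?W B)" for A B
    using Mpos by (simp add: norm_Mweight less_imp_le flip: Mweight_diff)
  obtain s l where s: "strict_mono s" and l: "l \<in> ?W ` hankel \<inter> ?W ` low_rank r"
      and lim: "(y \<circ> s) \<longlonglongrightarrow> l"
    using alternating_projections_convergent_subsequence[of _ _ _ _ y,
        OF alternating_projections_axioms y_Suc]
    by blast
  obtain Z where "Z \<in> hankel" "Z \<in> low_rank r" "l = ?W Z"
    using l Munweight_Mweight[OF Mpos] by (metis IntE IntI image_iff)
  moreover have "(\<lambda>n. norm (y (s n) - l)) \<longlonglongrightarrow> 0"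
    using lim by (simp add: o_def LIM_zero tendsto_norm_zero)
  ultimately have "\<exists>s Z. strict_mono s \<and> Z \<in> hankel \<and> Z \<in> low_rank r \<and>
               (\<lambda>n. Mnorm M (Y (s n) - Z)) \<longlonglongrightarrow> 0"
    using s by (auto simp: Mnorm_diff y_def)
  then show ?thesis
    using dist_PC_tendsto_zero[of y, OF y_Suc] dist_PH_tendsto_zero[of y, OF y_Suc]
    by (simp add: Mnorm_diff y_def Munweight_Mweight[OF Mpos])
qed

end
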